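(* For every $t>0$ there is a constant $C_t>0$ such that for all integers $m\ge3$, $$\Big(\frac1\pi\Big)^m\int_{\substack{v_j,r_j>0\\ v_1+r_2+v_2+\dots+v_{m-1}+r_m+v_m<t}}\prod_{j=1}^mdv_j\prod_{j=2}^mdr_j\ \prod_{j=2}^m\frac{1}{r_j^{1/2}\,(v_{j-1}+v_j+3r_j/4)^{3/2}}\ \ge\ C_t\,(1.008)^m\,\frac{1}{m(m-1)}.$$
   Context: All variables $v_1,\dots,v_m,r_2,\dots,r_m$ are real; the integral is a Lebesgue integral over the indicated open region of $(0,\infty)^{2m-1}$. *)

theory Defs
  imports "HOL-Analysis.Analysis"
begin

definition int_space :: "nat \<Rightarrow> ((nat \<Rightarrow> real) \<times> (nat \<Rightarrow> real)) measure" where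
  "int_space m = (PiM {1..m} (\<lambda>_. lborel)) \<Otimes>\<^sub>M (PiM {2..m} (\<lambda>_. lborel))"

definition int_region :: "nat \<Rightarrow> real \<Rightarrow> ((nat \<Rightarrow> real) \<times> (nat \<Rightarrow> real)) set" where
  "int_region m t = {(v, r). (\<forall>j\<in>{1..m}. v j > 0) \<and> (\<forall>j\<in>{2..m}. r j > 0) \<and>
      (\<Sum>j=1..m. v j) + (\<Sum>j=2..m. r j) < t}"

definition integrand :: "nat \<Rightarrow> (nat \<Rightarrow> real) \<Rightarrow> (nat \<Rightarrow> real) \<Rightarrow> real" where
  "integrand m v r = (\<Prod>j=2..m. 1 / (r j powr (1/2) * (v (j-1) + v j + 3 * r j / 4) powr (3/2)))"

end

theory Submission
  imports Defs
begin

text \<open>Put \<open>a\<^sub>j = v\<^sub>j\<^sub>-\<^sub>1 + v\<^sub>j\<close> and restrict the integral to \<open>v\<^sub>j \<in> (0, e)\<close> and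
  \<open>r\<^sub>j \<in> [a\<^sub>j/10000, 64 a\<^sub>j]\<close>; for \<open>129 m e \<le> t\<close> this box lies in the region of integration.
  The \<open>r\<^sub>j\<close>-factor has the antiderivative \<open>2 \<surd>r / (a \<surd>(a + 3r/4))\<close>, so integrating out each
  \<open>r\<^sub>j\<close> over its window leaves at least \<open>(793/350)/a\<^sub>j\<close>. What remains is the \<open>m\<close>-fold chain
  integral of the kernel \<open>(793/350)/(x + y)\<close> over \<open>(0, e)\<^sup>m\<close>, i.e. an iterate of the integral
  operator \<open>T\<close> with this kernel. A step function \<open>\<psi> \<le> 1\<close>, constant on the dyadic cells
  \<open>[e/2\<^sup>n\<^sup>+\<^sup>1, e/2\<^sup>n)\<close> for \<open>n < 9\<close>, satisfies \<open>T \<psi> \<ge> 3.17 \<psi>\<close>, so the chain integral is at least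
  \<open>3.17\<^sup>m\<^sup>-\<^sup>1\<close> times a multiple of \<open>e\<close>. Since \<open>3.17/\<pi> > 1.008\<close>, the choice \<open>e = t/(129 m)\<close>
  gives the bound, the factor \<open>1/m\<close> being absorbed by \<open>1/(m(m-1))\<close>.\<close>

section \<open>Chain integrals of a nonnegative kernel\<close>

interpretation lborel_product: product_sigma_finite "\<lambda>_::nat. lborel :: real measure"
  by standard

definition chain_integral ::
    "nat \<Rightarrow> (real \<Rightarrow> ennreal) \<Rightarrow> (real \<Rightarrow> real \<Rightarrow> ennreal) \<Rightarrow> (real \<Rightarrow> ennreal) \<Rightarrow> ennreal" where
  "chain_integral m A k w =
     (\<integral>\<^sup>+v. (\<Prod>j\<in>{1..m}. A (v j)) * (\<Prod>j\<in>{2..m}. k (v (j-1)) (v j)) * w (v m)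
        \<partial>PiM {1..m} (\<lambda>_. lborel))"

definition transfer :: "(real \<Rightarrow> ennreal) \<Rightarrow> (real \<Rightarrow> real \<Rightarrow> ennreal) \<Rightarrow> (real \<Rightarrow> ennreal) \<Rightarrow> real \<Rightarrow> ennreal" where
  "transfer A k w x = (\<integral>\<^sup>+y. A y * k x y * w y \<partial>lborel)"

lemma borel_measurable_chain_integrand:
  fixes A w :: "real \<Rightarrow> ennreal" and k :: "real \<Rightarrow> real \<Rightarrow> ennreal" and m :: nat
  assumes [measurable]: "A \<in> borel_measurable borel" "w \<in> borel_measurable borel"
    "case_prod k \<in> borel_measurable borel"
    and "m \<ge> 1"
  shows "(\<lambda>v. (\<Prod>j\<in>{1..m}. A (v j)) * (\<Prod>j\<in>{2..m}. k (v (j-1)) (v j)) * w (v m))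
    \<in> borel_measurable (PiM {1..m} (\<lambda>_. lborel :: real measure))"
proof -
  have [measurable]: "(\<lambda>v. k (v (j-1)) (v j)) \<in> borel_measurable (PiM {1..m} (\<lambda>_. lborel :: real measure))"
    if "j \<in> {2..m}" for j :: nat
  proof -
    have "j - 1 \<in> {1..m}" "j \<in> {1..m}" using that by auto
    then have "(\<lambda>v. case_prod k (v (j-1), v j)) \<in> borel_measurable (PiM {1..m} (\<lambda>_. lborel :: real measure))"
      by measurable
    then show ?thesis by simp
  qed
  show ?thesis
    by measurable (use \<open>m \<ge> 1\<close> in auto)
qed

lemma chain_integrand_fun_upd_Suc:
  fixes A w :: "real \<Rightarrow> ennreal" and k :: "real \<Rightarrow> real \<Rightarrow> ennreal" and m :: nat
  assumes "m \<ge> 1"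
  shows "(\<Prod>j\<in>{1..Suc m}. A ((x(Suc m := y)) j)) *
      (\<Prod>j\<in>{2..Suc m}. k ((x(Suc m := y)) (j-1)) ((x(Suc m := y)) j)) * w ((x(Suc m := y)) (Suc m))
    = ((\<Prod>j\<in>{1..m}. A (x j)) * (\<Prod>j\<in>{2..m}. k (x (j-1)) (x j))) * (A y * k (x m) y * w y)"
proof -
  have "(\<Prod>j\<in>{1..m}. A ((x(Suc m := y)) j)) = (\<Prod>j\<in>{1..m}. A (x j))"
    "(\<Prod>j\<in>{2..m}. k ((x(Suc m := y)) (j-1)) ((x(Suc m := y)) j)) = (\<Prod>j\<in>{2..m}. k (x (j-1)) (x j))"
    by (auto intro!: prod.cong)
  then show ?thesis
    using assms by (simp add: atLeastAtMostSuc_conv mult_ac)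
qed

lemma chain_integral_Suc:
  fixes A w :: "real \<Rightarrow> ennreal" and k :: "real \<Rightarrow> real \<Rightarrow> ennreal" and m :: nat
  assumes [measurable]: "A \<in> borel_measurable borel" "w \<in> borel_measurable borel"
    "case_prod k \<in> borel_measurable borel"
    and "m \<ge> 1"
  shows "chain_integral (Suc m) A k w = chain_integral m A k (transfer A k w)"
proof -
  have [measurable]: "k a \<in> borel_measurable borel" for a
  proof -
    have "(\<lambda>y. case_prod k (a, y)) \<in> borel_measurable borel" by measurable
    then show ?thesis by simp
  qed
  let ?F = "\<lambda>v. (\<Prod>j\<in>{1..Suc m}. A (v j)) * (\<Prod>j\<in>{2..Suc m}. k (v (j-1)) (v j)) * w (v (Suc m))"
  let ?P = "\<lambda>v. (\<Prod>j\<in>{1..m}. A (v j)) * (\<Prod>j\<in>{2..m}. k (v (j-1)) (v j))"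
  have insert_Suc: "{1..Suc m} = insert (Suc m) {1..m}" by auto
  have F: "?F \<in> borel_measurable (PiM (insert (Suc m) {1..m}) (\<lambda>_. lborel :: real measure))"
    using borel_measurable_chain_integrand[of A w k "Suc m"] unfolding insert_Suc by simp
  have "chain_integral (Suc m) A k w = integral\<^sup>N (PiM (insert (Suc m) {1..m}) (\<lambda>_. lborel)) ?F"
    unfolding chain_integral_def insert_Suc ..
  also have "\<dots> = (\<integral>\<^sup>+x. (\<integral>\<^sup>+y. ?F (x(Suc m := y)) \<partial>lborel) \<partial>PiM {1..m} (\<lambda>_. lborel))"
    by (rule lborel_product.product_nn_integral_insert[OF _ _ F]) auto
  also have "\<dots> = (\<integral>\<^sup>+x. ?P x * transfer A k w (x m) \<partial>PiM {1..m} (\<lambda>_. lborel))"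
    unfolding transfer_def chain_integrand_fun_upd_Suc[OF \<open>m \<ge> 1\<close>]
    by (intro nn_integral_cong nn_integral_cmult) measurable
  finally show ?thesis
    unfolding chain_integral_def by simp
qed

lemma chain_integral_mono:
  assumes "\<And>x. w x \<le> w' x"
  shows "chain_integral m A k w \<le> chain_integral m A k w'"
  unfolding chain_integral_def by (intro nn_integral_mono mult_left_mono assms) auto

lemma chain_integral_cmult:
  fixes A w :: "real \<Rightarrow> ennreal" and k :: "real \<Rightarrow> real \<Rightarrow> ennreal" and m :: nat
  assumes "A \<in> borel_measurable borel" "w \<in> borel_measurable borel"
    "case_prod k \<in> borel_measurable borel"
    and "m \<ge> 1"
  shows "chain_integral m A k (\<lambda>x. c * w x) = c * chain_integral m A k w"
  unfolding chain_integral_def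
  using nn_integral_cmult[OF borel_measurable_chain_integrand[OF assms], of c]
  by (simp add: mult_ac)

lemma chain_integral_1:
  assumes [measurable]: "A \<in> borel_measurable borel" "w \<in> borel_measurable borel"
  shows "chain_integral 1 A k w = (\<integral>\<^sup>+y. A y * w y \<partial>lborel)"
  unfolding chain_integral_def
  by (simp add: lborel_product.product_nn_integral_singleton[of "\<lambda>y. A y * w y"])

lemma chain_integral_ge_power:
  fixes A w :: "real \<Rightarrow> ennreal" and k :: "real \<Rightarrow> real \<Rightarrow> ennreal" and m :: nat
  assumes "A \<in> borel_measurable borel" "w \<in> borel_measurable borel"
    "case_prod k \<in> borel_measurable borel"
    and eigen: "\<And>x. c * w x \<le> transfer A k w x"
    and "m \<ge> 1"
  shows "c ^ (m - 1) * chain_integral 1 A k w \<le> chain_integral m A k w"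
  using \<open>m \<ge> 1\<close>
proof (induction m rule: nat_induct_at_least)
  case base
  then show ?case by simp
next
  case (Suc m)
  have "c ^ (Suc m - 1) * chain_integral 1 A k w = c * (c ^ (m - 1) * chain_integral 1 A k w)"
    using Suc.hyps by (cases m) (auto simp: mult_ac)
  also have "\<dots> \<le> c * chain_integral m A k w"
    by (intro mult_left_mono Suc.IH) simp
  also have "\<dots> = chain_integral m A k (\<lambda>x. c * w x)"
    using chain_integral_cmult[OF assms(1-3) Suc.hyps] by simp
  also have "\<dots> \<le> chain_integral m A k (transfer A k w)"
    by (intro chain_integral_mono eigen)
  also have "\<dots> = chain_integral (Suc m) A k w"
    using chain_integral_Suc[OF assms(1-3) Suc.hyps] by simp
  finally show ?case .
qed

section \<open>Integrating out one variable \<open>r\<^sub>j\<close>\<close>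

definition r_kernel :: "real \<Rightarrow> real \<Rightarrow> real" where
  "r_kernel a r = 1 / (r powr (1/2) * (a + 3 * r / 4) powr (3/2))"

lemma powr_three_halves: "(x::real) > 0 \<Longrightarrow> x powr (3/2) = x * sqrt x"
  using powr_add[of x 1 "1/2"] by (simp add: powr_half_sqrt)

lemma r_kernel_antiderivative:
  fixes a r :: real
  assumes a: "a > 0" and r: "r > 0"
  shows "((\<lambda>r. 2 * sqrt r / (a * sqrt (a + 3 * r / 4))) has_real_derivative r_kernel a r) (at r)"
proof -
  define S Q where "S = sqrt r" and "Q = sqrt (a + 3 * r / 4)"
  have pos: "S > 0" "Q > 0" using a r by (auto simp: S_def Q_def)
  have QS: "Q * Q = a + 3 * (S * S) / 4" using a r by (auto simp: S_def Q_def)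
  have derivative: "((\<lambda>r. 2 * sqrt r / (a * sqrt (a + 3 * r / 4))) has_real_derivative
      (2 * (inverse S / 2) * (a * Q) - 2 * S * (a * (inverse Q / 2 * (3 / 4)))) / (a * Q)\<^sup>2) (at r)"
    unfolding S_def Q_def using a r by (auto intro!: derivative_eq_intros simp: power2_eq_square)
  have "(2 * (inverse S / 2) * (a * Q) - 2 * S * (a * (inverse Q / 2 * (3 / 4)))) / (a * Q)\<^sup>2
      = a * (Q * Q - 3 * (S * S) / 4) / (S * Q * (a * Q)\<^sup>2)"
    using pos by (simp add: field_simps)
  also have "\<dots> = a * a / (S * Q * (a * Q)\<^sup>2)"
    by (simp add: QS)
  also have "\<dots> = 1 / (S * ((Q * Q) * Q))"
    using a pos by (simp add: field_simps power2_eq_square)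
  also have "\<dots> = r_kernel a r"
    unfolding r_kernel_def S_def Q_def using a r by (simp add: powr_half_sqrt powr_three_halves)
  finally show ?thesis
    using derivative by simp
qed

lemma has_integral_r_kernel:
  fixes a lo hi :: real
  assumes "a > 0" "lo > 0" "lo \<le> hi"
  shows "(r_kernel a has_integral
      2 * sqrt hi / (a * sqrt (a + 3 * hi / 4)) - 2 * sqrt lo / (a * sqrt (a + 3 * lo / 4))) {lo..hi}"
proof (rule fundamental_theorem_of_calculus[OF \<open>lo \<le> hi\<close>])
  fix r assume "r \<in> {lo..hi}"
  then have "r > 0" using assms by auto
  from r_kernel_antiderivative[OF \<open>a > 0\<close> this]
  show "((\<lambda>r. 2 * sqrt r / (a * sqrt (a + 3 * r / 4))) has_vector_derivative r_kernel a r) (at r within {lo..hi})"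
    using has_real_derivative_iff_has_vector_derivative has_vector_derivative_at_within by blast
qed

definition truncated_r_kernel :: "real \<Rightarrow> real \<Rightarrow> ennreal" where
  "truncated_r_kernel a r = ennreal (r_kernel a r) * indicator {a/10000..64*a} r"

lemma r_kernel_nonneg: "r_kernel a r \<ge> 0"
  unfolding r_kernel_def by simp

lemma nn_integral_truncated_r_kernel_ge:
  fixes a :: real
  assumes a: "a > 0"
  shows "ennreal ((793/350) / a) \<le> (\<integral>\<^sup>+r. truncated_r_kernel a r \<partial>lborel)"
proof -
  define F where "F r = 2 * sqrt r / (a * sqrt (a + 3 * r / 4))" for r
  have "(\<integral>\<^sup>+r. truncated_r_kernel a r \<partial>lborel) = ennreal (F (64*a) - F (a/10000))"
    unfolding truncated_r_kernel_def F_def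
    by (rule nn_integral_has_integral_lebesgue'[OF r_kernel_nonneg has_integral_r_kernel])
      (use a in auto)
  moreover have "F (64*a) = 16 / (7*a)"
  proof -
    have "sqrt (64*a) = 8 * sqrt a" "sqrt (a + 3*(64*a)/4) = 7 * sqrt a"
      using real_sqrt_mult[of 64 a] real_sqrt_mult[of 49 a] by simp_all
    then show ?thesis unfolding F_def using a by (simp add: field_simps)
  qed
  moreover have "F (a/10000) \<le> 1 / (50*a)"
  proof -
    have "sqrt (a/10000) = sqrt a / 100" by (simp add: real_sqrt_divide)
    moreover have "sqrt a \<le> sqrt (a + 3*(a/10000)/4)" "sqrt a > 0" using a by simp_all
    ultimately show ?thesis unfolding F_def using a by (simp add: field_simps)
  qed
  ultimately show ?thesis
    using a by (auto intro!: ennreal_leI simp: field_simps)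
qed

section \<open>A dyadic test function for the reduced kernel\<close>

definition pair_kernel :: "real \<Rightarrow> real \<Rightarrow> ennreal" where
  "pair_kernel x y = ennreal ((793/350) / (x + y))"

definition dyadic_cell :: "real \<Rightarrow> nat \<Rightarrow> real set" where
  "dyadic_cell e n = {e / 2 ^ Suc n ..< e / 2 ^ n}"

text \<open>The weights approximate a positive eigenvector of the \<open>9 \<times> 9\<close> matrix appearing in
  \<open>test_weight_eigen_inequality\<close>.\<close>

definition test_weight :: "nat \<Rightarrow> real" where
  "test_weight n = (if n < 9 then [6, 11, 17, 25, 37, 51, 67, 84, 100] ! n / 100 else 0)"

definition test_function :: "real \<Rightarrow> real \<Rightarrow> ennreal" where
  "test_function e y = (\<Sum>n<9. ennreal (test_weight n) * indicator (dyadic_cell e n) y)"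

lemma pair_kernel_measurable [measurable]:
  "case_prod pair_kernel \<in> borel_measurable borel"
  "pair_kernel x \<in> borel_measurable borel"
proof -
  have "(\<lambda>z::real \<times> real. ennreal ((793/350) / (fst z + snd z))) \<in> borel_measurable (borel \<Otimes>\<^sub>M borel)"
    by measurable
  then show "case_prod pair_kernel \<in> borel_measurable borel"
    unfolding pair_kernel_def borel_prod by (simp add: case_prod_beta')
  show "pair_kernel x \<in> borel_measurable borel"
    unfolding pair_kernel_def by measurable
qed

lemma test_function_measurable [measurable]: "test_function e \<in> borel_measurable borel"
  unfolding test_function_def dyadic_cell_def by measurable

lemma test_weight_bounds: "0 \<le> test_weight n" "test_weight n \<le> 1"
proof -
  have "n \<in> {0, 1, 2, 3, 4, 5, 6, 7, 8} \<or> \<not> n < 9" by auto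
  then show "0 \<le> test_weight n" "test_weight n \<le> 1"
    unfolding test_weight_def by auto
qed

lemma dyadic_cell_bounds:
  assumes "e > 0" "x \<in> dyadic_cell e n"
  shows "0 < x" "x < e / 2 ^ n"
proof -
  have "0 < e / 2 ^ Suc n" using assms(1) by simp
  then show "0 < x" "x < e / 2 ^ n"
    using assms(2) unfolding dyadic_cell_def by auto
qed

lemma dyadic_cells_disjoint:
  assumes "e > 0" "x \<in> dyadic_cell e n" "x \<in> dyadic_cell e p"
  shows "n = p"
proof (rule ccontr)
  have le: "e / 2 ^ q \<le> e / 2 ^ Suc q'" if "q' < q" for q q' :: nat
    using assms(1) that by (intro divide_left_mono power_increasing) auto
  assume "n \<noteq> p"
  then consider "n < p" | "p < n" by linarith
  then show False
    using le[of n p] le[of p n] assms(2,3) unfolding dyadic_cell_def by cases auto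
qed

lemma test_function_on_cell:
  assumes "e > 0" "x \<in> dyadic_cell e p" "p < 9"
  shows "test_function e x = ennreal (test_weight p)"
proof -
  have "test_function e x = (\<Sum>n<9. if n = p then ennreal (test_weight p) else 0)"
    unfolding test_function_def
    by (intro sum.cong refl) (use assms dyadic_cells_disjoint in \<open>auto simp: indicator_def\<close>)
  then show ?thesis using assms(3) by simp
qed

lemma test_function_off_cells:
  assumes "\<And>n. n < 9 \<Longrightarrow> x \<notin> dyadic_cell e n"
  shows "test_function e x = 0"
  unfolding test_function_def using assms by (intro sum.neutral) simp

lemma test_function_le_1:
  assumes "e > 0"
  shows "test_function e x \<le> 1"
  using test_function_on_cell[OF assms] test_function_off_cells test_weight_bounds(2)
  by (cases "\<exists>p<9. x \<in> dyadic_cell e p") auto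

lemma test_weight_eigen_inequality:
  assumes "p < 9"
  shows "317/100 * test_weight p \<le> 793/350 * (\<Sum>n<9. test_weight n * 2^p / (2 * (2^n + 2^p)))"
proof -
  have nine: "(\<Sum>n<9. test_weight n * 2^p / (2 * (2^n + 2^p)))
      = (\<Sum>n\<in>{0, 1, 2, 3, 4, 5, 6, 7, 8}. test_weight n * 2^p / (2 * (2^n + 2^p)))"
    by (rule sum.cong) auto
  have "p \<in> {0, 1, 2, 3, 4, 5, 6, 7, 8}" using assms by auto
  then show ?thesis unfolding nine by (auto simp: test_weight_def)
qed

lemma dyadic_cell_pair_kernel_integral_ge:
  assumes e: "e > 0" and x: "0 < x" "x < e / 2^p"
  shows "ennreal (793/350 * (2^p / (2 * (2^n + 2^p))))
    \<le> (\<integral>\<^sup>+y. indicator {0<..<e} y * pair_kernel x y * indicator (dyadic_cell e n) y \<partial>lborel)"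
proof -
  define c where "c = (793/350) / (e / 2^p + e / 2^n)"
  have "e / 2^n \<le> e" using e by (simp add: field_simps)
  then have "ennreal c * indicator (dyadic_cell e n) y
      \<le> indicator {0<..<e} y * pair_kernel x y * indicator (dyadic_cell e n) y" for y
    using x dyadic_cell_bounds[OF e, of y n] unfolding c_def pair_kernel_def dyadic_cell_def
    by (auto simp: indicator_def intro!: ennreal_leI divide_left_mono)
  then have "(\<integral>\<^sup>+y. ennreal c * indicator (dyadic_cell e n) y \<partial>lborel)
      \<le> (\<integral>\<^sup>+y. indicator {0<..<e} y * pair_kernel x y * indicator (dyadic_cell e n) y \<partial>lborel)"
    by (rule nn_integral_mono)
  moreover have "(\<integral>\<^sup>+y. ennreal c * indicator (dyadic_cell e n) y \<partial>lborel)
      = ennreal (c * (e / 2^n - e / 2^Suc n))"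
  proof -
    have "c \<ge> 0" "e / 2^Suc n \<le> e / 2^n" using e by (simp_all add: c_def field_simps)
    then show ?thesis
      using e unfolding dyadic_cell_def by (simp add: nn_integral_cmult_indicator flip: ennreal_mult)
  qed
  moreover have "c * (e / 2^n - e / 2^Suc n) = 793/350 * (2^p / (2 * (2^n + 2^p)))"
    using e unfolding c_def by (simp add: field_simps) (simp flip: distrib_left)
  ultimately show ?thesis by simp
qed

lemma transfer_test_function_ge:
  assumes e: "e > 0"
  shows "ennreal (317/100) * test_function e x \<le> transfer (indicator {0<..<e}) pair_kernel (test_function e) x"
proof (cases "\<exists>p<9. x \<in> dyadic_cell e p")
  case False
  then show ?thesis by (simp add: test_function_off_cells)
next
  case True
  then obtain p where p: "p < 9" "x \<in> dyadic_cell e p" by auto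
  note x = dyadic_cell_bounds[OF e p(2)]
  have "ennreal (317/100) * test_function e x = ennreal (317/100 * test_weight p)"
    using test_function_on_cell[OF e p(2,1)] test_weight_bounds(1)[of p] by (simp flip: ennreal_mult)
  also have "\<dots> \<le> ennreal (\<Sum>n<9. test_weight n * (793/350 * (2^p / (2 * (2^n + 2^p)))))"
    using test_weight_eigen_inequality[OF p(1)] by (intro ennreal_leI) (simp add: sum_distrib_left mult_ac)
  also have "\<dots> = (\<Sum>n<9. ennreal (test_weight n * (793/350 * (2^p / (2 * (2^n + 2^p))))))"
    by (rule sum_ennreal[symmetric]) (simp add: test_weight_bounds(1))
  also have "\<dots> = (\<Sum>n<9. ennreal (test_weight n) * ennreal (793/350 * (2^p / (2 * (2^n + 2^p)))))"
    by (intro sum.cong refl ennreal_mult) (simp_all add: test_weight_bounds(1))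
  also have "\<dots> \<le> (\<Sum>n<9. ennreal (test_weight n) *
      (\<integral>\<^sup>+y. indicator {0<..<e} y * pair_kernel x y * indicator (dyadic_cell e n) y \<partial>lborel))"
    by (intro sum_mono mult_left_mono dyadic_cell_pair_kernel_integral_ge[OF e x]) auto
  also have "\<dots> = (\<integral>\<^sup>+y. (\<Sum>n<9. ennreal (test_weight n) *
      (indicator {0<..<e} y * pair_kernel x y * indicator (dyadic_cell e n) y)) \<partial>lborel)"
    by (subst nn_integral_sum) (auto simp: dyadic_cell_def intro!: sum.cong nn_integral_cmult[symmetric])
  also have "\<dots> = transfer (indicator {0<..<e}) pair_kernel (test_function e) x"
    unfolding transfer_def test_function_def
    by (intro nn_integral_cong) (simp only: sum_distrib_left ac_simps)
  finally show ?thesis .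
qed

lemma chain_integral_1_test_function_ge:
  assumes e: "e > 0"
  shows "ennreal (3/100 * e) \<le> chain_integral 1 (indicator {0<..<e}) k (test_function e)"
proof -
  have "ennreal (6/100) * indicator (dyadic_cell e 0) y \<le> indicator {0<..<e} y * test_function e y" for y
    using test_function_on_cell[OF e, of y 0] dyadic_cell_bounds[OF e, of y 0]
    by (auto simp: indicator_def test_weight_def)
  then have "(\<integral>\<^sup>+y. ennreal (6/100) * indicator (dyadic_cell e 0) y \<partial>lborel)
      \<le> (\<integral>\<^sup>+y. indicator {0<..<e} y * test_function e y \<partial>lborel)"
    by (rule nn_integral_mono)
  moreover have "(\<integral>\<^sup>+y. ennreal (6/100) * indicator (dyadic_cell e 0) y \<partial>lborel) = ennreal (3/100 * e)"
    using e unfolding dyadic_cell_def by (simp add: nn_integral_cmult_indicator flip: ennreal_mult)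
  moreover have "chain_integral 1 (indicator {0<..<e}) k (test_function e)
      = (\<integral>\<^sup>+y. indicator {0<..<e} y * test_function e y \<partial>lborel)"
    by (rule chain_integral_1) measurable
  ultimately show ?thesis
    by simp
qed

section \<open>Restricting the integral\<close>

definition restricted_integrand :: "real \<Rightarrow> nat \<Rightarrow> (nat \<Rightarrow> real) \<Rightarrow> (nat \<Rightarrow> real) \<Rightarrow> ennreal" where
  "restricted_integrand e m v r =
     (\<Prod>j\<in>{1..m}. indicator {0<..<e} (v j)) * (\<Prod>j\<in>{2..m}. truncated_r_kernel (v (j-1) + v j) (r j))"

lemma restricted_support_subset_int_region:
  fixes m :: nat and e t :: real
  assumes m: "m \<ge> 1" and t: "129 * real m * e \<le> t"
    and v: "\<And>j. j \<in> {1..m} \<Longrightarrow> v j \<in> {0<..<e}"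
    and r: "\<And>j. j \<in> {2..m} \<Longrightarrow> r j \<in> {(v (j-1) + v j)/10000..64 * (v (j-1) + v j)}"
  shows "(v, r) \<in> int_region m t"
proof -
  have pair_bounds: "0 < v (j-1) + v j" "v (j-1) + v j < 2 * e" if "j \<in> {2..m}" for j
  proof -
    have "j - 1 \<in> {1..m}" "j \<in> {1..m}" using that by auto
    then have "v (j-1) \<in> {0<..<e}" "v j \<in> {0<..<e}" by (blast intro: v)+
    then show "0 < v (j-1) + v j" "v (j-1) + v j < 2 * e" by auto
  qed
  have r_pos: "r j > 0" if "j \<in> {2..m}" for j
    using r[OF that] pair_bounds[OF that] by (smt (verit) atLeastAtMost_iff divide_pos_pos)
  have "(\<Sum>j=1..m. v j) < (\<Sum>j=1..m. e)"
    by (rule sum_strict_mono) (use m v in auto)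
  moreover have "(\<Sum>j=2..m. r j) \<le> (\<Sum>j=2..m. 128 * e)"
    by (rule sum_mono) (use r pair_bounds in fastforce)
  moreover have "(\<Sum>j=2..m. 128 * e) \<le> 128 * e * real m"
    using v[of 1] m by (simp add: mult_left_mono)
  ultimately have "(\<Sum>j=1..m. v j) + (\<Sum>j=2..m. r j) < t"
    using t by (simp add: algebra_simps)
  then show ?thesis
    unfolding int_region_def using v r_pos by auto
qed

lemma restricted_integrand_le:
  fixes m :: nat and e t :: real
  assumes "m \<ge> 1" "129 * real m * e \<le> t"
  shows "restricted_integrand e m v r \<le> indicator (int_region m t) (v, r) * ennreal (integrand m v r)"
proof (cases "(\<forall>j\<in>{1..m}. v j \<in> {0<..<e}) \<and>
    (\<forall>j\<in>{2..m}. r j \<in> {(v (j-1) + v j)/10000..64 * (v (j-1) + v j)})")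
  case True
  then have "(v, r) \<in> int_region m t"
    using restricted_support_subset_int_region[OF assms] by blast
  moreover have "restricted_integrand e m v r = ennreal (\<Prod>j\<in>{2..m}. r_kernel (v (j-1) + v j) (r j))"
    unfolding restricted_integrand_def truncated_r_kernel_def using True
    by (simp add: r_kernel_nonneg prod_ennreal)
  ultimately show ?thesis
    unfolding integrand_def r_kernel_def by simp
next
  case False
  then have "restricted_integrand e m v r = 0"
    unfolding restricted_integrand_def truncated_r_kernel_def
    by (auto simp: indicator_def intro!: prod_zero)
  then show ?thesis by simp
qed

lemma borel_measurable_restricted_integrand:
  "(\<lambda>z. restricted_integrand e m (fst z) (snd z)) \<in> borel_measurable (int_space m)"
proof -
  have [measurable]: "(\<lambda>z. truncated_r_kernel (fst z (j-1) + fst z j) (snd z j))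
      \<in> borel_measurable (PiM {1..m} (\<lambda>_. lborel :: real measure) \<Otimes>\<^sub>M PiM {2..m} (\<lambda>_. lborel :: real measure))"
    if "j \<in> {2..m}" for j
  proof -
    have [measurable]: "j - 1 \<in> {1..m}" "j \<in> {1..m}" "j \<in> {2..m}" using that by auto
    have truncated_eq: "truncated_r_kernel a r
        = ennreal (if a/10000 \<le> r \<and> r \<le> 64*a then r_kernel a r else 0)" for a r
      unfolding truncated_r_kernel_def by simp
    show ?thesis
      unfolding truncated_eq r_kernel_def by measurable
  qed
  show ?thesis
    unfolding restricted_integrand_def int_space_def by measurable
qed

lemma restricted_integrand_r_integral_ge:
  fixes m :: nat and e :: real
  shows "(\<Prod>j\<in>{1..m}. indicator {0<..<e} (v j)) * (\<Prod>j\<in>{2..m}. pair_kernel (v (j-1)) (v j))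
    \<le> (\<integral>\<^sup>+r. restricted_integrand e m v r \<partial>PiM {2..m} (\<lambda>_. lborel))"
proof -
  have [measurable]: "truncated_r_kernel a \<in> borel_measurable lborel" for a
    unfolding truncated_r_kernel_def r_kernel_def by measurable
  have "(\<integral>\<^sup>+r. restricted_integrand e m v r \<partial>PiM {2..m} (\<lambda>_. lborel))
      = (\<Prod>j\<in>{1..m}. indicator {0<..<e} (v j)) *
        (\<integral>\<^sup>+r. (\<Prod>j\<in>{2..m}. truncated_r_kernel (v (j-1) + v j) (r j)) \<partial>PiM {2..m} (\<lambda>_. lborel))"
    unfolding restricted_integrand_def by (rule nn_integral_cmult) measurable
  also have "\<dots> = (\<Prod>j\<in>{1..m}. indicator {0<..<e} (v j)) *
        (\<Prod>j\<in>{2..m}. \<integral>\<^sup>+r. truncated_r_kernel (v (j-1) + v j) r \<partial>lborel)"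
    by (subst lborel_product.product_nn_integral_prod) auto
  finally have integral_eq: "(\<integral>\<^sup>+r. restricted_integrand e m v r \<partial>PiM {2..m} (\<lambda>_. lborel)) = \<dots>" .
  show ?thesis
  proof (cases "\<forall>j\<in>{1..m}. 0 < v j")
    case True
    have "pair_kernel (v (j-1)) (v j) \<le> (\<integral>\<^sup>+r. truncated_r_kernel (v (j-1) + v j) r \<partial>lborel)"
      if "j \<in> {2..m}" for j
    proof -
      have "j - 1 \<in> {1..m}" "j \<in> {1..m}" using that by auto
      then have "v (j-1) + v j > 0" using True by (simp add: add_pos_pos)
      then show ?thesis
        unfolding pair_kernel_def by (rule nn_integral_truncated_r_kernel_ge)
    qed
    then show ?thesis
      unfolding integral_eq by (intro mult_left_mono prod_mono_ennreal) auto
  next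
    case False
    then obtain j where "j \<in> {1..m}" "v j \<le> 0" by auto
    then have "(\<Prod>j\<in>{1..m}. indicator {0<..<e} (v j) :: ennreal) = 0"
      by (intro prod_zero) (auto intro!: bexI[of _ j])
    then show ?thesis by (simp only: mult_zero_left zero_le)
  qed
qed

lemma nn_integral_int_region_ge:
  fixes m :: nat and e t :: real
  assumes e: "e > 0" and m: "m \<ge> 1" and t: "129 * real m * e \<le> t"
  shows "ennreal ((317/100)^(m-1) * (3/100 * e))
    \<le> (\<integral>\<^sup>+x. indicator (int_region m t) x * ennreal (integrand m (fst x) (snd x)) \<partial>int_space m)"
proof -
  interpret r_space: sigma_finite_measure "PiM {2..m} (\<lambda>_. lborel :: real measure)"
    by (rule lborel_product.sigma_finite) simp
  let ?A = "indicator {0<..<e} :: real \<Rightarrow> ennreal"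
  have "ennreal ((317/100)^(m-1) * (3/100 * e)) = ennreal (317/100) ^ (m-1) * ennreal (3/100 * e)"
    using e by (subst ennreal_mult) (auto simp: ennreal_power)
  also have "\<dots> \<le> ennreal (317/100) ^ (m-1) * chain_integral 1 ?A pair_kernel (test_function e)"
    by (intro mult_left_mono chain_integral_1_test_function_ge e) simp
  also have "\<dots> \<le> chain_integral m ?A pair_kernel (test_function e)"
    by (rule chain_integral_ge_power[OF _ test_function_measurable pair_kernel_measurable(1)
          transfer_test_function_ge[OF e] m]) measurable
  also have "\<dots> \<le> chain_integral m ?A pair_kernel (\<lambda>_. 1)"
    by (intro chain_integral_mono test_function_le_1 e)
  also have "\<dots> \<le> (\<integral>\<^sup>+v. \<integral>\<^sup>+r. restricted_integrand e m v r \<partial>PiM {2..m} (\<lambda>_. lborel) \<partial>PiM {1..m} (\<lambda>_. lborel))"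
    unfolding chain_integral_def
    by (intro nn_integral_mono) (metis mult_1_right restricted_integrand_r_integral_ge)
  also have "\<dots> = (\<integral>\<^sup>+z. restricted_integrand e m (fst z) (snd z) \<partial>int_space m)"
    using r_space.nn_integral_fst[OF borel_measurable_restricted_integrand[unfolded int_space_def]]
    unfolding int_space_def by simp
  also have "\<dots> \<le> (\<integral>\<^sup>+x. indicator (int_region m t) x * ennreal (integrand m (fst x) (snd x)) \<partial>int_space m)"
    using restricted_integrand_le[OF m t] by (intro nn_integral_mono) (metis prod.collapse)
  finally show ?thesis .
qed

lemma power_1_008_div_le:
  fixes m :: nat and c :: real
  assumes "m \<ge> 2" "c \<ge> 0"
  shows "c * 1.008 ^ m / (real m * (real m - 1)) \<le> (317 / (100 * pi)) ^ m * c / real m"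
proof -
  have "1.008 \<le> 317 / (100 * pi)"
    using pi_approx(2) pi_gt3 by (simp add: field_simps)
  then have "1.008 ^ m \<le> (317 / (100 * pi)) ^ m"
    by (rule power_mono) simp
  then have "c * 1.008 ^ m \<le> c * (317 / (100 * pi)) ^ m"
    using assms(2) by (rule mult_left_mono)
  moreover have "real m \<le> real m * (real m - 1)"
    using assms(1) by simp
  ultimately have "c * 1.008 ^ m / (real m * (real m - 1)) \<le> c * (317 / (100 * pi)) ^ m / real m"
    using assms by (intro frac_le) auto
  then show ?thesis
    by (simp add: mult.commute)
qed

theorem mainTheorem14:
  fixes t :: real
  assumes "t > 0"
  shows "\<exists>C::real. C > 0 \<and> (\<forall>m::nat. m \<ge> 3 \<longrightarrow>
    ennreal ((1/pi) ^ m) *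
      (\<integral>\<^sup>+ x. indicator (int_region m t) x * ennreal (integrand m (fst x) (snd x)) \<partial>int_space m)
    \<ge> ennreal (C * 1.008 ^ m / (real m * (real m - 1))))"
proof (intro exI[of _ "3 * t / (129 * 317)"] conjI allI impI)
  show "3 * t / (129 * 317) > 0" using assms by simp
  fix m :: nat assume m: "m \<ge> 3"
  define e where "e = t / (129 * real m)"
  have e: "e > 0" "129 * real m * e \<le> t" using assms m by (simp_all add: e_def)
  have "3 * t / (129 * 317) * 1.008 ^ m / (real m * (real m - 1))
      \<le> (317 / (100 * pi)) ^ m * (3 * t / (129 * 317)) / real m"
    using m assms by (intro power_1_008_div_le) auto
  also have "\<dots> = (1/pi)^m * ((317/100)^(m-1) * (3/100 * e))"
  proof -
    obtain k where k: "m = Suc k" using m by (cases m) auto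
    have "pi ^ k > 0" "pi > 0" "real m > 0" using m by auto
    then show ?thesis
      unfolding e_def k by (simp add: power_divide divide_simps)
  qed
  finally have "ennreal (3 * t / (129 * 317) * 1.008 ^ m / (real m * (real m - 1)))
      \<le> ennreal ((1/pi)^m) * ennreal ((317/100)^(m-1) * (3/100 * e))"
    using e by (simp add: ennreal_leI flip: ennreal_mult)
  also have "\<dots> \<le> ennreal ((1/pi)^m) *
      (\<integral>\<^sup>+ x. indicator (int_region m t) x * ennreal (integrand m (fst x) (snd x)) \<partial>int_space m)"
    using m by (intro mult_left_mono nn_integral_int_region_ge e) auto
  finally show "ennreal ((1/pi) ^ m) *
      (\<integral>\<^sup>+ x. indicator (int_region m t) x * ennreal (integrand m (fst x) (snd x)) \<partial>int_space m)
    \<ge> ennreal (3 * t / (129 * 317) * 1.008 ^ m / (real m * (real m - 1)))" .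
qed

end
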